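(* For the semi-discrete finite volume scheme $\frac{d}{dt}\mathbf U_{i,j}=-\frac{\mathcal F_{i+\frac12,j}-\mathcal F_{i-\frac12,j}}{\Delta x}-\frac{\mathcal G_{i,j+\frac12}-\mathcal G_{i,j-\frac12}}{\Delta y}+\mathbf S_{i,j}$ for the stochastic Galerkin shallow water system, with numerical fluxes $\mathcal F=\mathcal F^{EC}$, $\mathcal G=\mathcal G^{EC}$ and source $\mathbf S_{i,j}$ as in the context, the local truncation error is $\mathcal O(\Delta x^2+\Delta y^2)$.
   Context: Let $\mathcal M_k\in\mathbb R^{K\times K}$, $(\mathcal M_k)_{l,m}=\int\phi_k\phi_l\phi_m\rho$, where $\phi_1\equiv1,\dots,\phi_K$ are polynomials orthonormal with respect to a probability density $\rho$ on $\mathbb R^d$ with all moments finite; $\mathcal P(\widehat z)=\sum_k\widehat z_k\mathcal M_k$; $g>0$. The SG shallow water system is $\widehat U_t+\widehat F(\widehat U)_x+\widehat G(\widehat U)_y=\widehat S(\widehat U)$, $\widehat U=(\widehat h,\widehat{q^x},\widehat{q^y})\in\mathbb R^{3K}$, $\widehat F=\big(\widehat{q^x};\ \mathcal P(\widehat{q^x})\mathcal P^{-1}(\widehat h)\widehat{q^x}+\tfrac12 g\mathcal P(\widehat h)\widehat h;\ \mathcal P(\widehat{q^x})\mathcal P^{-1}(\widehat h)\widehat{q^y}\big)$, $\widehat G=\big(\widehat{q^y};\ \mathcal P(\widehat{q^y})\mathcal P^{-1}(\widehat h)\widehat{q^x};\ \mathcal P(\widehat{q^y})\mathcal P^{-1}(\widehat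 h)\widehat{q^y}+\tfrac12 g\mathcal P(\widehat h)\widehat h\big)$, $\widehat S=\big(0;-g\mathcal P(\widehat h)\widehat B_x;-g\mathcal P(\widehat h)\widehat B_y\big)$, bottom $\widehat B(x,y)\in\mathbb R^K$. Uniform rectangular grid with cell sizes $\Delta x,\Delta y$ and centers $(x_i,y_j)$; cell values $\mathbf U_{i,j}=(\mathbf h_{i,j},\mathbf q^x_{i,j},\mathbf q^y_{i,j})$, $\mathbf B_{i,j}$; $\mathbf u_{i,j}=\mathcal P^{-1}(\mathbf h_{i,j})\mathbf q^x_{i,j}$, $\mathbf v_{i,j}=\mathcal P^{-1}(\mathbf h_{i,j})\mathbf q^y_{i,j}$. Averages/jumps: $\overline{\mathbf a}_{i+\frac12,j}=\tfrac12(\mathbf a_{i,j}+\mathbf a_{i+1,j})$, $[\![\mathbf a]\!]_{i+\frac12,j}=\mathbf a_{i+1,j}-\mathbf a_{i,j}$, and analogously in $j$; $\overline{\mathcal P(\mathbf h)\mathbf h}$ is the average of $\mathcal P(\mathbf h_{i,j})\mathbf h_{i,j}$. $\mathcal F^{EC}_{i+\frac12,j}=\big(\mathcal P(\overline{\mathbf h})\overline{\mathbf u};\ \tfrac12 g\,\overline{\mathcal P(\mathbf h)\mathbf h}+\mathcal P(\overline{\mathbf u})\mathcal P(\overline{\mathbf h})\overline{\mathbf u};\ \mathcal P(\overline{\mathbf v})\mathcal P(\overline{\mathbf h})\overline{\mathbf u}\big)_{i+\frac12,j}$, $\mathcal G^{EC}_{i,j+\frac12}=\big(\mathcal P(\overline{\mathbf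 h})\overline{\mathbf v};\ \mathcal P(\overline{\mathbf u})\mathcal P(\overline{\mathbf h})\overline{\mathbf v};\ \tfrac12 g\,\overline{\mathcal P(\mathbf h)\mathbf h}+\mathcal P(\overline{\mathbf v})\mathcal P(\overline{\mathbf h})\overline{\mathbf v}\big)_{i,j+\frac12}$, $\mathbf S_{i,j}=\Big(0;\ -\tfrac{g}{2\Delta x}\big(\mathcal P(\overline{\mathbf h}_{i+\frac12,j})[\![\mathbf B]\!]_{i+\frac12,j}+\mathcal P(\overline{\mathbf h}_{i-\frac12,j})[\![\mathbf B]\!]_{i-\frac12,j}\big);\ -\tfrac{g}{2\Delta y}\big(\mathcal P(\overline{\mathbf h}_{i,j+\frac12})[\![\mathbf B]\!]_{i,j+\frac12}+\mathcal P(\overline{\mathbf h}_{i,j-\frac12})[\![\mathbf B]\!]_{i,j-\frac12}\big)\Big)$. Local truncation error $\mathcal O(\Delta x^2+\Delta y^2)$ means: for smooth $\widehat U,\widehat B$ with $\mathcal P(\widehat h)$ positive definite, taking $\mathbf U_{i,j}=\widehat U(x_i,y_j)$, $\mathbf B_{i,j}=\widehat B(x_i,y_j)$, the right-hand side of the scheme equals $\big(-\widehat F(\widehat U)_x-\widehat G(\widehat U)_y+\widehat S(\widehat U)\big)(x_i,y_j)+\mathcal O(\Delta x^2+\Delta y^2)$. *)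

theory Defs
  imports "HOL-Analysis.Analysis" "HOL-Library.Landau_Symbols"
begin

definition monomial_d :: "('d::finite \<Rightarrow> nat) \<Rightarrow> real^'d \<Rightarrow> real" where
  "monomial_d \<alpha> x = (\<Prod>i\<in>UNIV. (x $ i) ^ (\<alpha> i))"

definition is_polynomial_d :: "(real^'d::finite \<Rightarrow> real) \<Rightarrow> bool" where
  "is_polynomial_d f \<longleftrightarrow> (\<exists>A c. finite A \<and> f = (\<lambda>x. \<Sum>\<alpha>\<in>A. c \<alpha> * monomial_d \<alpha> x))"

definition prob_density_all_moments :: "(real^'d::finite \<Rightarrow> real) \<Rightarrow> bool" where
  "prob_density_all_moments \<rho> \<longleftrightarrow>
     \<rho> \<in> borel_measurable lborel \<and> (\<forall>x. 0 \<le> \<rho> x) \<and>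
     integrable lborel \<rho> \<and> integral\<^sup>L lborel \<rho> = 1 \<and>
     (\<forall>\<alpha>. integrable lborel (\<lambda>x. monomial_d \<alpha> x * \<rho> x))"

definition orthonormal_pc_basis ::
    "(real^'d::finite \<Rightarrow> real) \<Rightarrow> ('k::finite \<Rightarrow> real^'d \<Rightarrow> real) \<Rightarrow> 'k \<Rightarrow> bool" where
  "orthonormal_pc_basis \<rho> \<phi> k1 \<longleftrightarrow>
     prob_density_all_moments \<rho> \<and>
     (\<forall>k. is_polynomial_d (\<phi> k)) \<and>
     \<phi> k1 = (\<lambda>_. 1) \<and>
     (\<forall>k l. integral\<^sup>L lborel (\<lambda>x. \<phi> k x * \<phi> l x * \<rho> x) = (if k = l then 1 else 0))"

definition Mtens :: "(real^'d::finite \<Rightarrow> real) \<Rightarrow> ('k::finite \<Rightarrow> real^'d \<Rightarrow> real) \<Rightarrow> 'k \<Rightarrow> real^'k^'k" where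
  "Mtens \<rho> \<phi> k = (\<chi> l m. integral\<^sup>L lborel (\<lambda>x. \<phi> k x * \<phi> l x * \<phi> m x * \<rho> x))"

definition Pm :: "('k::finite \<Rightarrow> real^'k^'k) \<Rightarrow> real^'k \<Rightarrow> real^'k^'k" where
  "Pm M z = (\<Sum>k\<in>UNIV. (z $ k) *\<^sub>R M k)"

definition Pinv :: "('k::finite \<Rightarrow> real^'k^'k) \<Rightarrow> real^'k \<Rightarrow> real^'k^'k" where
  "Pinv M z = matrix_inv (Pm M z)"

definition pos_def :: "real^'k^'k \<Rightarrow> bool" where
  "pos_def A \<longleftrightarrow> (\<forall>v. v \<noteq> 0 \<longrightarrow> v \<bullet> (A *v v) > 0)"

type_synonym 'k state = "(real^'k) \<times> (real^'k) \<times> (real^'k)"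

definition Fhat :: "real \<Rightarrow> ('k::finite \<Rightarrow> real^'k^'k) \<Rightarrow> 'k state \<Rightarrow> 'k state" where
  "Fhat g M U = (case U of (h, qx, qy) \<Rightarrow>
     (qx,
      Pm M qx *v (Pinv M h *v qx) + (g / 2) *\<^sub>R (Pm M h *v h),
      Pm M qx *v (Pinv M h *v qy)))"

definition Ghat :: "real \<Rightarrow> ('k::finite \<Rightarrow> real^'k^'k) \<Rightarrow> 'k state \<Rightarrow> 'k state" where
  "Ghat g M U = (case U of (h, qx, qy) \<Rightarrow>
     (qy,
      Pm M qy *v (Pinv M h *v qx),
      Pm M qy *v (Pinv M h *v qy) + (g / 2) *\<^sub>R (Pm M h *v h)))"

text \<open>Source term, given the bottom derivatives Bx, By.\<close>
definition Shat :: "real \<Rightarrow> ('k::finite \<Rightarrow> real^'k^'k) \<Rightarrow> 'k state \<Rightarrow> real^'k \<Rightarrow> real^'k \<Rightarrow> 'k state" where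
  "Shat g M U Bx By = (case U of (h, qx, qy) \<Rightarrow>
     (0, - g *\<^sub>R (Pm M h *v Bx), - g *\<^sub>R (Pm M h *v By)))"

fun Ck_on :: "nat \<Rightarrow> ('a::real_normed_vector) set \<Rightarrow> ('a \<Rightarrow> 'b::real_normed_vector) \<Rightarrow> bool" where
  "Ck_on 0 S f = continuous_on S f"
| "Ck_on (Suc n) S f = (f differentiable_on S \<and>
      (\<forall>v. Ck_on n S (\<lambda>p. frechet_derivative f (at p) v)))"

definition smooth_on :: "('a::real_normed_vector) set \<Rightarrow> ('a \<Rightarrow> 'b::real_normed_vector) \<Rightarrow> bool" where
  "smooth_on S f \<longleftrightarrow> (\<forall>n. Ck_on n S f)"

definition avg :: "real^'k \<Rightarrow> real^'k \<Rightarrow> real^'k" where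
  "avg a b = (1/2) *\<^sub>R (a + b)"

definition vel_u :: "('k::finite \<Rightarrow> real^'k^'k) \<Rightarrow> 'k state \<Rightarrow> real^'k" where
  "vel_u M U = (case U of (h, qx, qy) \<Rightarrow> Pinv M h *v qx)"

definition vel_v :: "('k::finite \<Rightarrow> real^'k^'k) \<Rightarrow> 'k state \<Rightarrow> real^'k" where
  "vel_v M U = (case U of (h, qx, qy) \<Rightarrow> Pinv M h *v qy)"

definition depth :: "'k state \<Rightarrow> real^'k" where
  "depth U = fst U"

text \<open>F^EC between a left state UL = U_{i,j} and a right state UR = U_{i+1,j}.\<close>
definition FEC :: "real \<Rightarrow> ('k::finite \<Rightarrow> real^'k^'k) \<Rightarrow> 'k state \<Rightarrow> 'k state \<Rightarrow> 'k state" where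
  "FEC g M UL UR =
    (let hb = avg (depth UL) (depth UR);
         ub = avg (vel_u M UL) (vel_u M UR);
         vb = avg (vel_v M UL) (vel_v M UR);
         phh = avg (Pm M (depth UL) *v depth UL) (Pm M (depth UR) *v depth UR)
     in (Pm M hb *v ub,
         (g / 2) *\<^sub>R phh + Pm M ub *v (Pm M hb *v ub),
         Pm M vb *v (Pm M hb *v ub)))"

text \<open>G^EC between a lower state UD = U_{i,j} and an upper state UU = U_{i,j+1}.\<close>
definition GEC :: "real \<Rightarrow> ('k::finite \<Rightarrow> real^'k^'k) \<Rightarrow> 'k state \<Rightarrow> 'k state \<Rightarrow> 'k state" where
  "GEC g M UD UU =
    (let hb = avg (depth UD) (depth UU);
         ub = avg (vel_u M UD) (vel_u M UU);
         vb = avg (vel_v M UD) (vel_v M UU);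
         phh = avg (Pm M (depth UD) *v depth UD) (Pm M (depth UU) *v depth UU)
     in (Pm M hb *v vb,
         Pm M ub *v (Pm M hb *v vb),
         (g / 2) *\<^sub>R phh + Pm M vb *v (Pm M hb *v vb)))"

definition Sdisc :: "real \<Rightarrow> ('k::finite \<Rightarrow> real^'k^'k) \<Rightarrow> real \<Rightarrow> real \<Rightarrow>
     (int \<Rightarrow> int \<Rightarrow> 'k state) \<Rightarrow> (int \<Rightarrow> int \<Rightarrow> real^'k) \<Rightarrow> int \<Rightarrow> int \<Rightarrow> 'k state" where
  "Sdisc g M dx dy U B i j =
    (let h = (\<lambda>i j. depth (U i j)) in
     (0,
      - (g / (2 * dx)) *\<^sub>R
          (Pm M (avg (h i j) (h (i+1) j)) *v (B (i+1) j - B i j)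
         + Pm M (avg (h (i-1) j) (h i j)) *v (B i j - B (i-1) j)),
      - (g / (2 * dy)) *\<^sub>R
          (Pm M (avg (h i j) (h i (j+1))) *v (B i (j+1) - B i j)
         + Pm M (avg (h i (j-1)) (h i j)) *v (B i j - B i (j-1)))))"

definition scheme_rhs :: "real \<Rightarrow> ('k::finite \<Rightarrow> real^'k^'k) \<Rightarrow> real \<Rightarrow> real \<Rightarrow>
     (int \<Rightarrow> int \<Rightarrow> 'k state) \<Rightarrow> (int \<Rightarrow> int \<Rightarrow> real^'k) \<Rightarrow> int \<Rightarrow> int \<Rightarrow> 'k state" where
  "scheme_rhs g M dx dy U B i j =
     - (1 / dx) *\<^sub>R (FEC g M (U i j) (U (i+1) j) - FEC g M (U (i-1) j) (U i j))
     - (1 / dy) *\<^sub>R (GEC g M (U i j) (U i (j+1)) - GEC g M (U i (j-1)) (U i j))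
     + Sdisc g M dx dy U B i j"

definition pde_rhs :: "real \<Rightarrow> ('k::finite \<Rightarrow> real^'k^'k) \<Rightarrow>
     (real \<times> real \<Rightarrow> 'k state) \<Rightarrow> (real \<times> real \<Rightarrow> real^'k) \<Rightarrow> real \<Rightarrow> real \<Rightarrow> 'k state" where
  "pde_rhs g M U B x0 y0 =
     - vector_derivative (\<lambda>s. Fhat g M (U (s, y0))) (at x0)
     - vector_derivative (\<lambda>t. Ghat g M (U (x0, t))) (at y0)
     + Shat g M (U (x0, y0))
         (vector_derivative (\<lambda>s. B (s, y0)) (at x0))
         (vector_derivative (\<lambda>t. B (x0, t)) (at y0))"

end

theory Submission
  imports Defs
begin

(* Along each grid line through the cell, every smooth quantity has a second-order Taylor
   expansion with bounded cubic remainder, and such expansions are closed under sums, bounded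
   bilinear products such as (a, b) \<mapsto> P(a) b, and solving P(h) u = q. Because F^EC and the averaged
   source terms are symmetric in their two states, the x-part of the scheme is the central difference
   -(\<chi>(\<Delta>x) - \<chi>(-\<Delta>x)) / \<Delta>x of \<chi>(t) = F^EC(U(0), U(t)) + (0, g/2 P(avg h) (B(t) - B(0)), 0),
   which is -2 \<chi>'(0) + O(\<Delta>x\<^sup>2). Since P(a) b = P(b) a (the triple products are symmetric in k and m),
   \<chi>'(0) is exactly half of \<partial>\<^sub>x F(U) + (0, g P(h) \<partial>\<^sub>x B, 0). The y-part follows by exchanging x and y. *)

section \<open>Second-order expansions at 0\<close>

lemma Bfun_add:
  fixes f g :: "'a \<Rightarrow> 'b::real_normed_vector"
  shows "Bfun f F \<Longrightarrow> Bfun g F \<Longrightarrow> Bfun (\<lambda>x. f x + g x) F"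
proof -
  assume "Bfun f F" "Bfun g F"
  then obtain K L where "eventually (\<lambda>x. norm (f x) \<le> K) F" "eventually (\<lambda>x. norm (g x) \<le> L) F"
    unfolding Bfun_def by blast
  then have "eventually (\<lambda>x. norm (f x + g x) \<le> K + L) F"
    by eventually_elim (meson add_mono norm_triangle_le)
  then show ?thesis by (rule BfunI)
qed

lemma Bfun_Pair:
  fixes f :: "'a \<Rightarrow> 'b::real_normed_vector" and g :: "'a \<Rightarrow> 'c::real_normed_vector"
  shows "Bfun f F \<Longrightarrow> Bfun g F \<Longrightarrow> Bfun (\<lambda>x. (f x, g x)) F"
proof -
  assume "Bfun f F" "Bfun g F"
  then obtain K L where "eventually (\<lambda>x. norm (f x) \<le> K) F" "eventually (\<lambda>x. norm (g x) \<le> L) F"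
    unfolding Bfun_def by blast
  then have "eventually (\<lambda>x. norm (f x, g x) \<le> K + L) F"
    by eventually_elim (meson add_mono norm_Pair_le order_trans)
  then show ?thesis by (rule BfunI)
qed

lemma (in bounded_bilinear) Bfun_prod: "Bfun f F \<Longrightarrow> Bfun g F \<Longrightarrow> Bfun (\<lambda>x. prod (f x) (g x)) F"
proof -
  obtain C where C: "\<And>a b. norm (prod a b) \<le> norm a * norm b * C" "C > 0"
    using pos_bounded by blast
  assume "Bfun f F" "Bfun g F"
  then obtain K L where "eventually (\<lambda>x. norm (f x) \<le> K) F" "eventually (\<lambda>x. norm (g x) \<le> L) F"
    unfolding Bfun_def by blast
  then have "eventually (\<lambda>x. norm (prod (f x) (g x)) \<le> K * L * C) F"
  proof eventually_elim
    case (elim x)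
    have "norm (prod (f x) (g x)) \<le> norm (f x) * norm (g x) * C" by (rule C)
    also have "\<dots> \<le> K * L * C"
      using elim C(2) by (intro mult_right_mono mult_mono) (auto intro: order_trans[OF norm_ge_zero])
    finally show ?case .
  qed
  then show ?thesis by (rule BfunI)
qed

lemma Bfun_eventually_norm_le:
  fixes f :: "'a \<Rightarrow> 'b::real_normed_vector" and g :: "'a \<Rightarrow> 'c::real_normed_vector"
  assumes "Bfun g F" "eventually (\<lambda>x. norm (f x) \<le> norm (g x)) F"
  shows "Bfun f F"
proof -
  obtain K where "eventually (\<lambda>x. norm (g x) \<le> K) F" using assms(1) unfolding Bfun_def by blast
  with assms(2) have "eventually (\<lambda>x. norm (f x) \<le> K) F" by eventually_elim simp
  then show ?thesis by (rule BfunI)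
qed

lemma Bfun_ident_nhds: "Bfun (\<lambda>x::'a::real_normed_vector. x) (nhds a)"
proof (rule BfunI)
  show "eventually (\<lambda>x. norm x \<le> norm a + 1) (nhds a)"
    using eventually_nhds_ball[OF zero_less_one, of a]
  proof eventually_elim
    case (elim x)
    then have "norm (x - a) < 1" by (simp add: dist_norm norm_minus_commute)
    then show ?case using norm_triangle_sub[of x a] by linarith
  qed
qed

definition has_expansion2 :: "(real \<Rightarrow> 'a::real_normed_vector) \<Rightarrow> 'a \<Rightarrow> 'a \<Rightarrow> 'a \<Rightarrow> bool" where
  "has_expansion2 f c0 c1 c2 \<longleftrightarrow>
     (\<exists>R. Bfun R (nhds 0) \<and> (\<forall>\<^sub>F t in nhds 0. f t = c0 + t *\<^sub>R c1 + t\<^sup>2 *\<^sub>R c2 + t ^ 3 *\<^sub>R R t))"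

lemma has_expansion2_at_0: "has_expansion2 f c0 c1 c2 \<Longrightarrow> f 0 = c0"
  unfolding has_expansion2_def by (auto dest: eventually_nhds_x_imp_x)

lemma has_expansion2_polynomial: "has_expansion2 (\<lambda>t. c0 + t *\<^sub>R c1 + t\<^sup>2 *\<^sub>R c2) c0 c1 c2"
  unfolding has_expansion2_def by (intro exI[of _ "\<lambda>t. 0"]) simp

lemma has_expansion2_const: "has_expansion2 (\<lambda>t. c) c 0 0"
  using has_expansion2_polynomial[of c 0 0] by simp

lemma has_expansion2_add:
  assumes "has_expansion2 f a0 a1 a2" "has_expansion2 g b0 b1 b2"
  shows "has_expansion2 (\<lambda>t. f t + g t) (a0 + b0) (a1 + b1) (a2 + b2)"
proof -
  obtain R S where "Bfun R (nhds 0)" "Bfun S (nhds 0)"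
    "\<forall>\<^sub>F t in nhds 0. f t = a0 + t *\<^sub>R a1 + t\<^sup>2 *\<^sub>R a2 + t ^ 3 *\<^sub>R R t"
    "\<forall>\<^sub>F t in nhds 0. g t = b0 + t *\<^sub>R b1 + t\<^sup>2 *\<^sub>R b2 + t ^ 3 *\<^sub>R S t"
    using assms unfolding has_expansion2_def by blast
  then show ?thesis
    unfolding has_expansion2_def
    by (intro exI[of _ "\<lambda>t. R t + S t"] conjI Bfun_add)
       (auto elim: eventually_elim2 simp: algebra_simps)
qed

lemma has_expansion2_Pair:
  assumes "has_expansion2 f a0 a1 a2" "has_expansion2 g b0 b1 b2"
  shows "has_expansion2 (\<lambda>t. (f t, g t)) (a0, b0) (a1, b1) (a2, b2)"
proof -
  obtain R S where "Bfun R (nhds 0)" "Bfun S (nhds 0)"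
    "\<forall>\<^sub>F t in nhds 0. f t = a0 + t *\<^sub>R a1 + t\<^sup>2 *\<^sub>R a2 + t ^ 3 *\<^sub>R R t"
    "\<forall>\<^sub>F t in nhds 0. g t = b0 + t *\<^sub>R b1 + t\<^sup>2 *\<^sub>R b2 + t ^ 3 *\<^sub>R S t"
    using assms unfolding has_expansion2_def by blast
  then show ?thesis
    unfolding has_expansion2_def
    by (intro exI[of _ "\<lambda>t. (R t, S t)"] conjI Bfun_Pair)
       (auto elim: eventually_elim2 simp: algebra_simps)
qed

lemma has_expansion2_Bfun: "has_expansion2 f c0 c1 c2 \<Longrightarrow> Bfun f (nhds 0)"
proof -
  assume "has_expansion2 f c0 c1 c2"
  then obtain R where R: "Bfun R (nhds 0)" "\<forall>\<^sub>F t in nhds 0. f t = c0 + t *\<^sub>R c1 + t\<^sup>2 *\<^sub>R c2 + t ^ 3 *\<^sub>R R t"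
    unfolding has_expansion2_def by blast
  interpret scaleR: bounded_bilinear "scaleR :: real \<Rightarrow> 'a \<Rightarrow> 'a" by (rule bounded_bilinear_scaleR)
  have "Bfun (\<lambda>t::real. t ^ n) (nhds 0)" for n
    by (induction n) (auto intro: bounded_bilinear.Bfun_prod[OF bounded_bilinear_mult] Bfun_ident_nhds)
  then have "Bfun (\<lambda>t. c0 + t *\<^sub>R c1 + t\<^sup>2 *\<^sub>R c2 + t ^ 3 *\<^sub>R R t) (nhds 0)"
    by (intro Bfun_add Bfun_const scaleR.Bfun_prod R(1) Bfun_ident_nhds)
  then show ?thesis
    by (rule Bfun_eventually_norm_le) (use R(2) in \<open>auto elim: eventually_mono\<close>)
qed

lemma (in bounded_bilinear) has_expansion2_prod:
  assumes F: "has_expansion2 f a0 a1 a2" and G: "has_expansion2 g b0 b1 b2"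
  shows "has_expansion2 (\<lambda>t. prod (f t) (g t))
           (prod a0 b0) (prod a0 b1 + prod a1 b0) (prod a0 b2 + prod a1 b1 + prod a2 b0)"
proof -
  interpret scaleR: bounded_bilinear "scaleR :: real \<Rightarrow> 'c \<Rightarrow> 'c" by (rule bounded_bilinear_scaleR)
  obtain R S where R: "Bfun R (nhds 0)" "\<forall>\<^sub>F t in nhds 0. f t = a0 + t *\<^sub>R a1 + t\<^sup>2 *\<^sub>R a2 + t ^ 3 *\<^sub>R R t"
    and S: "Bfun S (nhds 0)" "\<forall>\<^sub>F t in nhds 0. g t = b0 + t *\<^sub>R b1 + t\<^sup>2 *\<^sub>R b2 + t ^ 3 *\<^sub>R S t"
    using F G unfolding has_expansion2_def by blast
  define pf where "pf t = a0 + t *\<^sub>R a1 + t\<^sup>2 *\<^sub>R a2" for t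
  define Q where "Q t = prod a1 b2 + prod a2 b1 + t *\<^sub>R prod a2 b2 + prod (pf t) (S t) + prod (R t) (g t)" for t
  have "Bfun pf (nhds 0)"
    unfolding pf_def by (rule has_expansion2_Bfun[OF has_expansion2_polynomial])
  then have "Bfun Q (nhds 0)"
    unfolding Q_def
    by (intro Bfun_add Bfun_const scaleR.Bfun_prod Bfun_ident_nhds Bfun_prod R S has_expansion2_Bfun[OF G])
  moreover have "\<forall>\<^sub>F t in nhds 0. prod (f t) (g t) = prod a0 b0 + t *\<^sub>R (prod a0 b1 + prod a1 b0)
      + t\<^sup>2 *\<^sub>R (prod a0 b2 + prod a1 b1 + prod a2 b0) + t ^ 3 *\<^sub>R Q t"
    using R(2) S(2)
  proof eventually_elim
    case (elim t)
    have "prod (f t) (g t) = prod (pf t) (g t) + t ^ 3 *\<^sub>R prod (R t) (g t)"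
      using elim(1) by (simp add: pf_def add_left scaleR_left)
    also have "prod (pf t) (g t) = prod (pf t) (b0 + t *\<^sub>R b1 + t\<^sup>2 *\<^sub>R b2) + t ^ 3 *\<^sub>R prod (pf t) (S t)"
      using elim(2) by (simp add: add_right scaleR_right)
    finally show ?case
      unfolding Q_def pf_def
      by (simp add: add_left add_right scaleR_left scaleR_right algebra_simps power2_eq_square power3_eq_cube)
  qed
  ultimately show ?thesis
    unfolding has_expansion2_def by blast
qed

lemma has_expansion2_scaleR:
  "has_expansion2 f a0 a1 a2 \<Longrightarrow> has_expansion2 (\<lambda>t. c *\<^sub>R f t) (c *\<^sub>R a0) (c *\<^sub>R a1) (c *\<^sub>R a2)"
  using bounded_bilinear.has_expansion2_prod[OF bounded_bilinear_scaleR has_expansion2_const] by simp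

lemma has_expansion2_diff:
  assumes "has_expansion2 f a0 a1 a2" "has_expansion2 g b0 b1 b2"
  shows "has_expansion2 (\<lambda>t. f t - g t) (a0 - b0) (a1 - b1) (a2 - b2)"
  using has_expansion2_add[OF assms(1) has_expansion2_scaleR[OF assms(2), of "-1"]] by simp

lemma has_expansion2_avg:
  assumes "has_expansion2 f a0 a1 a2"
  shows "has_expansion2 (\<lambda>t. avg (f 0) (f t)) a0 ((1/2) *\<^sub>R a1) ((1/2) *\<^sub>R a2)"
proof -
  have "(1/2) *\<^sub>R (a0 + a0) = a0"
    by (simp flip: scaleR_2)
  then show ?thesis
    using has_expansion2_scaleR[OF has_expansion2_add[OF has_expansion2_const[of a0] assms], of "1/2"]
    unfolding avg_def has_expansion2_at_0[OF assms] by simp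
qed

lemma has_expansion2I:
  assumes "\<forall>\<^sub>F t in nhds 0. norm (f t - (c0 + t *\<^sub>R c1 + t\<^sup>2 *\<^sub>R c2)) \<le> C * \<bar>t\<bar> ^ 3"
  shows "has_expansion2 f c0 c1 c2"
proof -
  define R where "R t = (1 / t ^ 3) *\<^sub>R (f t - (c0 + t *\<^sub>R c1 + t\<^sup>2 *\<^sub>R c2))" for t
  have "f 0 = c0" using eventually_nhds_x_imp_x[OF assms] by simp
  then have "\<forall>\<^sub>F t in nhds 0. f t = c0 + t *\<^sub>R c1 + t\<^sup>2 *\<^sub>R c2 + t ^ 3 *\<^sub>R R t"
    by (intro always_eventually) (simp add: R_def)
  moreover have "\<forall>\<^sub>F t in nhds 0. norm (R t) \<le> norm C"
    using assms
  proof eventually_elim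
    case (elim t)
    have "C * \<bar>t\<bar> ^ 3 \<le> norm C * \<bar>t\<bar> ^ 3" by (intro mult_right_mono) auto
    with elim have "norm (f t - (c0 + t *\<^sub>R c1 + t\<^sup>2 *\<^sub>R c2)) \<le> norm C * \<bar>t\<bar> ^ 3" by linarith
    then show ?case
      by (cases "t = 0") (simp_all add: R_def divide_le_eq power_abs)
  qed
  then have "Bfun R (nhds 0)" by (rule BfunI)
  ultimately show ?thesis unfolding has_expansion2_def by blast
qed

lemma has_expansion2_has_vector_derivative:
  assumes "has_expansion2 f c0 c1 c2"
  shows "(f has_vector_derivative c1) (at 0)"
proof -
  interpret scaleR: bounded_bilinear "scaleR :: real \<Rightarrow> 'a \<Rightarrow> 'a" by (rule bounded_bilinear_scaleR)
  obtain R where R: "Bfun R (nhds 0)" "\<forall>\<^sub>F t in nhds 0. f t = c0 + t *\<^sub>R c1 + t\<^sup>2 *\<^sub>R c2 + t ^ 3 *\<^sub>R R t"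
    using assms unfolding has_expansion2_def by blast
  have "f 0 = c0" by (rule has_expansion2_at_0[OF assms])
  have "Bfun (\<lambda>t. c2 + t *\<^sub>R R t) (at 0)"
    using Bfun_add[OF Bfun_const scaleR.Bfun_prod[OF Bfun_ident_nhds R(1)]]
    unfolding Bfun_def eventually_nhds_conv_at by blast
  moreover have "Zfun (\<lambda>t::real. \<bar>t\<bar>) (at 0)"
    using tendsto_rabs_zero[OF tendsto_ident_at[of 0 UNIV]] by (simp add: tendsto_Zfun_iff)
  ultimately have lim: "((\<lambda>t. \<bar>t\<bar> *\<^sub>R (c2 + t *\<^sub>R R t)) \<longlongrightarrow> 0) (at 0)"
    by (simp add: tendsto_Zfun_iff scaleR.Zfun_prod_Bfun)
  have "\<forall>\<^sub>F t in at 0. f t = c0 + t *\<^sub>R c1 + t\<^sup>2 *\<^sub>R c2 + t ^ 3 *\<^sub>R R t"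
    using R(2) unfolding eventually_nhds_conv_at by blast
  moreover have "\<forall>\<^sub>F t in at (0::real). t \<noteq> 0"
    by (simp add: eventually_at_filter)
  ultimately have "\<forall>\<^sub>F t in at 0. \<bar>t\<bar> *\<^sub>R (c2 + t *\<^sub>R R t) = (f t - f 0 - t *\<^sub>R c1) /\<^sub>R norm t"
  proof eventually_elim
    case (elim t)
    then have "f t - f 0 - t *\<^sub>R c1 = (t * t) *\<^sub>R (c2 + t *\<^sub>R R t)"
      by (simp add: \<open>f 0 = c0\<close> algebra_simps power2_eq_square power3_eq_cube)
    then have "f t - f 0 - t *\<^sub>R c1 = (\<bar>t\<bar> * \<bar>t\<bar>) *\<^sub>R (c2 + t *\<^sub>R R t)"
      by (simp only: abs_mult_self_eq)
    moreover have "inverse \<bar>t\<bar> * (\<bar>t\<bar> * \<bar>t\<bar>) = \<bar>t\<bar>"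
      using elim(2) by (simp add: field_simps)
    ultimately show ?case by simp
  qed
  with lim show ?thesis
    unfolding has_vector_derivative_def has_derivative_at_within
    by (auto intro: Lim_transform_eventually bounded_linear_scaleR_left)
qed

lemma has_expansion2_imp_bound:
  assumes "has_expansion2 f c0 c1 c2"
  shows "\<exists>C. \<forall>\<^sub>F t in nhds 0. norm (f t - (c0 + t *\<^sub>R c1 + t\<^sup>2 *\<^sub>R c2)) \<le> C * \<bar>t\<bar> ^ 3"
proof -
  obtain R C where "\<forall>\<^sub>F t in nhds 0. norm (R t) \<le> C"
    "\<forall>\<^sub>F t in nhds 0. f t = c0 + t *\<^sub>R c1 + t\<^sup>2 *\<^sub>R c2 + t ^ 3 *\<^sub>R R t"
    using assms unfolding has_expansion2_def Bfun_def by blast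
  then have "\<forall>\<^sub>F t in nhds 0. norm (f t - (c0 + t *\<^sub>R c1 + t\<^sup>2 *\<^sub>R c2)) \<le> C * \<bar>t\<bar> ^ 3"
  proof eventually_elim
    case (elim t)
    then have "norm (f t - (c0 + t *\<^sub>R c1 + t\<^sup>2 *\<^sub>R c2)) = \<bar>t\<bar> ^ 3 * norm (R t)"
      by (simp add: power_abs)
    also have "\<dots> \<le> \<bar>t\<bar> ^ 3 * C"
      using elim(1) by (simp add: mult_left_mono)
    finally show ?case by (simp add: mult.commute)
  qed
  then show ?thesis by blast
qed

lemma has_expansion2_central_difference:
  assumes "has_expansion2 f c0 c1 c2"
  shows "\<exists>C. \<forall>\<^sub>F t in at_right 0. norm ((1 / t) *\<^sub>R (f t - f (- t)) - 2 *\<^sub>R c1) \<le> C * t\<^sup>2"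
proof -
  define p where "p t = c0 + t *\<^sub>R c1 + t\<^sup>2 *\<^sub>R c2" for t
  obtain C where near: "\<forall>\<^sub>F t in nhds 0. norm (f t - p t) \<le> C * \<bar>t\<bar> ^ 3"
    using has_expansion2_imp_bound[OF assms] unfolding p_def by blast
  moreover have "filterlim uminus (nhds 0) (nhds (0::real))"
    using tendsto_minus[OF filterlim_ident, of "0::real"] by simp
  ultimately have "\<forall>\<^sub>F t in nhds 0. norm (f (- t) - p (- t)) \<le> C * \<bar>t\<bar> ^ 3"
    using eventually_compose_filterlim[of _ "nhds 0" uminus] by fastforce
  with near have "\<forall>\<^sub>F t in at_right 0. norm (f t - p t) \<le> C * \<bar>t\<bar> ^ 3 \<and> norm (f (- t) - p (- t)) \<le> C * \<bar>t\<bar> ^ 3"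
    unfolding eventually_nhds_conv_at eventually_at_split by (simp add: eventually_conj_iff)
  moreover have "\<forall>\<^sub>F t in at_right (0::real). 0 < t"
    by (rule eventually_at_right_less)
  ultimately have "\<forall>\<^sub>F t in at_right 0. norm ((1 / t) *\<^sub>R (f t - f (- t)) - 2 *\<^sub>R c1) \<le> (2 * C) * t\<^sup>2"
  proof eventually_elim
    case (elim t)
    have "(1 / t) *\<^sub>R (f t - f (- t)) - 2 *\<^sub>R c1 = (1 / t) *\<^sub>R ((f t - p t) - (f (- t) - p (- t)))"
      using elim(2) by (simp add: p_def algebra_simps scaleR_2)
    also have "norm \<dots> \<le> (1 / t) * (C * t ^ 3 + C * t ^ 3)"
      using elim norm_triangle_ineq4[of "f t - p t" "f (- t) - p (- t)"]
      by (simp add: divide_right_mono)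
    also have "\<dots> = (2 * C) * t\<^sup>2"
      using elim(2) by (simp add: power2_eq_square power3_eq_cube)
    finally show ?case .
  qed
  then show ?thesis by blast
qed

lemma has_expansion2_tendsto:
  assumes "has_expansion2 f c0 c1 c2"
  shows "(f \<longlongrightarrow> c0) (nhds 0)"
proof -
  have "isCont f 0"
    by (rule has_vector_derivative_continuous[OF has_expansion2_has_vector_derivative[OF assms]])
  then have "(f \<longlongrightarrow> f 0) (nhds 0)"
    unfolding isCont_def tendsto_at_iff_tendsto_nhds .
  then show ?thesis
    using has_expansion2_at_0[OF assms] by simp
qed

lemma has_expansion2_zero_dominated:
  assumes "has_expansion2 z 0 0 0" and "\<forall>\<^sub>F t in nhds 0. norm (w t) \<le> L * norm (z t)"
  shows "has_expansion2 w 0 0 0"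
proof -
  obtain C where "\<forall>\<^sub>F t in nhds 0. norm (z t) \<le> C * \<bar>t\<bar> ^ 3"
    using has_expansion2_imp_bound[OF assms(1)] by auto
  with assms(2) have "\<forall>\<^sub>F t in nhds 0. norm (w t - (0 + t *\<^sub>R 0 + t\<^sup>2 *\<^sub>R 0)) \<le> (\<bar>L\<bar> * C) * \<bar>t\<bar> ^ 3"
  proof eventually_elim
    case (elim t)
    have "norm (w t) \<le> \<bar>L\<bar> * norm (z t)"
      using elim(1) by (meson abs_ge_self mult_right_mono norm_ge_zero order_trans)
    also have "\<dots> \<le> \<bar>L\<bar> * (C * \<bar>t\<bar> ^ 3)"
      using elim(2) by (simp add: mult_left_mono)
    finally show ?case by (simp add: mult.assoc)
  qed
  then show ?thesis by (rule has_expansion2I)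
qed

lemma has_expansion2_cong:
  "has_expansion2 f c0 c1 c2 \<Longrightarrow> (\<And>t. f t = g t) \<Longrightarrow> c1 = d1 \<Longrightarrow> has_expansion2 g c0 d1 c2"
  by (metis ext)

section \<open>Stochastic Galerkin products\<close>

lemma Pm_mult_component:
  "(Pm M a *v b) $ l = (\<Sum>k\<in>UNIV. a $ k * (\<Sum>m\<in>UNIV. M k $ l $ m * b $ m))"
proof -
  have "(Pm M a *v b) $ l = (\<Sum>m\<in>UNIV. (\<Sum>k\<in>UNIV. a $ k * M k $ l $ m) * b $ m)"
    by (simp add: Pm_def matrix_vector_mult_def)
  also have "\<dots> = (\<Sum>k\<in>UNIV. \<Sum>m\<in>UNIV. a $ k * (M k $ l $ m * b $ m))"
    by (subst sum.swap) (simp add: sum_distrib_right mult.assoc)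
  also have "\<dots> = (\<Sum>k\<in>UNIV. a $ k * (\<Sum>m\<in>UNIV. M k $ l $ m * b $ m))"
    by (simp add: sum_distrib_left)
  finally show ?thesis .
qed

lemma bounded_bilinear_Pm: "bounded_bilinear (\<lambda>a b. Pm M a *v (b :: real^'k::finite))"
proof -
  have "linear (\<lambda>a. Pm M a *v b)" for b :: "real^'k"
    by (rule linearI)
       (simp_all add: vec_eq_iff Pm_mult_component algebra_simps sum.distrib sum_distrib_left)
  then have "bilinear (\<lambda>a b. Pm M a *v (b :: real^'k))"
    by (simp add: bilinear_def)
  then show ?thesis by (simp add: bilinear_conv_bounded_bilinear)
qed

lemma Pm_Mtens_commute: "Pm (Mtens \<rho> \<phi>) a *v b = Pm (Mtens \<rho> \<phi>) b *v a"
proof -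
  have sym: "Mtens \<rho> \<phi> k $ l $ m = Mtens \<rho> \<phi> m $ l $ k" for k l m
    unfolding Mtens_def by (simp add: mult_ac)
  have "(\<Sum>k\<in>UNIV. a $ k * (\<Sum>m\<in>UNIV. Mtens \<rho> \<phi> k $ l $ m * b $ m))
      = (\<Sum>m\<in>UNIV. b $ m * (\<Sum>k\<in>UNIV. Mtens \<rho> \<phi> m $ l $ k * a $ k))" for l
  proof -
    have "(\<Sum>k\<in>UNIV. a $ k * (\<Sum>m\<in>UNIV. Mtens \<rho> \<phi> k $ l $ m * b $ m))
        = (\<Sum>k\<in>UNIV. \<Sum>m\<in>UNIV. b $ m * (Mtens \<rho> \<phi> m $ l $ k * a $ k))"
      by (simp add: sum_distrib_left sym mult_ac)
    also have "\<dots> = (\<Sum>m\<in>UNIV. b $ m * (\<Sum>k\<in>UNIV. Mtens \<rho> \<phi> m $ l $ k * a $ k))"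
      by (subst sum.swap) (simp add: sum_distrib_left)
    finally show ?thesis .
  qed
  then show ?thesis by (simp add: vec_eq_iff Pm_mult_component)
qed

lemma matrix_inv_mult_right: "invertible A \<Longrightarrow> A *v (matrix_inv A *v y) = y"
  unfolding invertible_def matrix_inv_def
  by (rule someI2_ex) (auto simp: matrix_vector_mul_assoc)

lemma matrix_inv_mult_left: "invertible A \<Longrightarrow> matrix_inv A *v (A *v y) = y"
  unfolding invertible_def matrix_inv_def
  by (rule someI2_ex) (auto simp: matrix_vector_mul_assoc)

lemma pos_def_invertible: "pos_def (A :: real^'k::finite^'k) \<Longrightarrow> invertible A"
  unfolding invertible_left_inverse matrix_left_invertible_ker pos_def_def
  by (metis inner_zero_right less_irrefl)

lemma eventually_norm_le_Pm_mult:
  fixes h :: "'a \<Rightarrow> real^'k::finite"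
  assumes inv: "invertible (Pm M h0)" and lim: "(h \<longlongrightarrow> h0) F"
  shows "\<exists>L. \<forall>\<^sub>F x in F. \<forall>w. norm w \<le> L * norm (Pm M (h x) *v w)"
proof -
  interpret P: bounded_bilinear "\<lambda>a b. Pm M a *v (b::real^'k)" by (rule bounded_bilinear_Pm)
  obtain K where K: "\<And>a b. norm (Pm M a *v b) \<le> norm a * norm b * K" "K > 0"
    using P.pos_bounded by blast
  obtain A where A: "\<And>y. norm (matrix_inv (Pm M h0) *v y) \<le> A * norm y" "A > 0"
    using bounded_linear.pos_bounded[OF matrix_vector_mul_bounded_linear] by (metis mult.commute)
  have "\<forall>\<^sub>F x in F. norm (h x - h0) < 1 / (2 * K * A)"
    using tendstoD[OF lim] K(2) A(2) by (simp add: dist_norm)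
  then have "\<forall>\<^sub>F x in F. \<forall>w. norm w \<le> (2 * A) * norm (Pm M (h x) *v w)"
  proof (rule eventually_mono, intro allI)
    fix x w
    assume close: "norm (h x - h0) < 1 / (2 * K * A)"
    have "norm w = norm (matrix_inv (Pm M h0) *v (Pm M (h x) *v w - Pm M (h x - h0) *v w))"
      using inv by (simp add: P.diff_left matrix_inv_mult_left)
    also have "\<dots> \<le> A * norm (Pm M (h x) *v w - Pm M (h x - h0) *v w)"
      by (rule A(1))
    also have "\<dots> \<le> A * (norm (Pm M (h x) *v w) + norm (h x - h0) * norm w * K)"
      using A(2) by (intro mult_left_mono order_trans[OF norm_triangle_ineq4] add_left_mono K(1)) auto
    also have "\<dots> \<le> A * (norm (Pm M (h x) *v w) + 1 / (2 * K * A) * norm w * K)"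
      using close A(2) K(2) by (intro mult_left_mono add_left_mono mult_right_mono) auto
    also have "\<dots> = A * norm (Pm M (h x) *v w) + norm w / 2"
      using A(2) K(2) by (simp add: field_simps)
    finally show "norm w \<le> (2 * A) * norm (Pm M (h x) *v w)" by simp
  qed
  then show ?thesis by blast
qed

lemma has_expansion2_Pinv_mult:
  fixes h q :: "real \<Rightarrow> real^'k::finite"
  assumes H: "has_expansion2 h h0 h1 h2" and Q: "has_expansion2 q q0 q1 q2"
    and inv: "\<forall>\<^sub>F t in nhds 0. invertible (Pm M (h t))"
  obtains u0 u1 u2 where "has_expansion2 (\<lambda>t. Pinv M (h t) *v q t) u0 u1 u2"
    and "Pm M h0 *v u0 = q0" and "Pm M h0 *v u1 + Pm M h1 *v u0 = q1"
proof -
  interpret P: bounded_bilinear "\<lambda>a b. Pm M a *v (b::real^'k)" by (rule bounded_bilinear_Pm)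
  have inv0: "invertible (Pm M h0)"
    using eventually_nhds_x_imp_x[OF inv] has_expansion2_at_0[OF H] by simp
  define A where "A = matrix_inv (Pm M h0)"
  define u0 where "u0 = A *v q0"
  define u1 where "u1 = A *v (q1 - Pm M h1 *v u0)"
  define u2 where "u2 = A *v (q2 - Pm M h1 *v u1 - Pm M h2 *v u0)"
  have e0: "Pm M h0 *v u0 = q0" and e1: "Pm M h0 *v u1 + Pm M h1 *v u0 = q1"
    and e2: "Pm M h0 *v u2 + Pm M h1 *v u1 + Pm M h2 *v u0 = q2"
    unfolding u2_def u1_def u0_def A_def by (simp_all add: matrix_inv_mult_right[OF inv0])
  define p where "p t = u0 + t *\<^sub>R u1 + t\<^sup>2 *\<^sub>R u2" for t
  define u where "u t = Pinv M (h t) *v q t" for t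
  have "has_expansion2 (\<lambda>t. Pm M (h t) *v p t) q0 q1 q2"
    using P.has_expansion2_prod[OF H has_expansion2_polynomial[of u0 u1 u2]]
    unfolding e0 e1 e2 p_def .
  from has_expansion2_diff[OF Q this]
  have "has_expansion2 (\<lambda>t. q t - Pm M (h t) *v p t) 0 0 0" by simp
  moreover obtain L where "\<forall>\<^sub>F t in nhds 0. \<forall>w. norm w \<le> L * norm (Pm M (h t) *v w)"
    using eventually_norm_le_Pm_mult[OF inv0 has_expansion2_tendsto[OF H]] by blast
  then have "\<forall>\<^sub>F t in nhds 0. norm (u t - p t) \<le> L * norm (q t - Pm M (h t) *v p t)"
    using inv
  proof eventually_elim
    case (elim t)
    have "Pm M (h t) *v (u t - p t) = q t - Pm M (h t) *v p t"
      using elim(2) by (simp add: u_def Pinv_def P.diff_right matrix_inv_mult_right)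
    then show ?case
      using spec[OF elim(1), of "u t - p t"] by simp
  qed
  ultimately have "has_expansion2 (\<lambda>t. u t - p t) 0 0 0"
    by (rule has_expansion2_zero_dominated)
  from has_expansion2_add[OF has_expansion2_polynomial[of u0 u1 u2] this]
  have "has_expansion2 u u0 u1 u2" by (simp add: p_def)
  then show ?thesis
    using e0 e1 unfolding u_def by (rule that)
qed

section \<open>Smooth functions along lines\<close>

lemma norm_le_power_Suc_by_derivative:
  fixes \<phi> :: "real \<Rightarrow> 'a::real_normed_vector"
  assumes "0 \<le> C" "\<phi> 0 = 0"
    and deriv: "\<And>s. \<bar>s\<bar> \<le> \<bar>t\<bar> \<Longrightarrow> (\<phi> has_vector_derivative \<phi>' s) (at s)"
    and bound: "\<And>s. \<bar>s\<bar> \<le> \<bar>t\<bar> \<Longrightarrow> norm (\<phi>' s) \<le> C * \<bar>s\<bar> ^ n"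
  shows "norm (\<phi> t) \<le> C * \<bar>t\<bar> ^ Suc n"
proof -
  have seg: "\<bar>s\<bar> \<le> \<bar>t\<bar>" if "s \<in> closed_segment 0 t" for s
    using segment_bound(1)[OF that] by simp
  have "norm (\<phi> t - \<phi> 0) \<le> C * \<bar>t\<bar> ^ n * norm (t - 0)"
  proof (rule differentiable_bound[OF convex_closed_segment])
    fix s assume s: "s \<in> closed_segment 0 t"
    show "(\<phi> has_derivative (\<lambda>h. h *\<^sub>R \<phi>' s)) (at s within closed_segment 0 t)"
      using deriv[OF seg[OF s]] by (simp add: has_vector_derivative_def has_derivative_at_withinI)
    have "norm (\<phi>' s) \<le> C * \<bar>t\<bar> ^ n"
      using bound[OF seg[OF s]] seg[OF s] \<open>0 \<le> C\<close>
      by (meson abs_ge_zero mult_left_mono order_trans power_mono)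
    then show "onorm (\<lambda>h. h *\<^sub>R \<phi>' s) \<le> C * \<bar>t\<bar> ^ n"
      by (simp add: onorm_scaleR_left onorm_id)
  qed auto
  then show ?thesis using \<open>\<phi> 0 = 0\<close> by (simp add: ac_simps)
qed

lemma norm_Taylor2_remainder_le:
  fixes f :: "nat \<Rightarrow> real \<Rightarrow> 'a::real_normed_vector"
  assumes deriv: "\<And>m s. m < 3 \<Longrightarrow> \<bar>s\<bar> \<le> a \<Longrightarrow> (f m has_vector_derivative f (Suc m) s) (at s)"
    and bound: "\<And>s. \<bar>s\<bar> \<le> a \<Longrightarrow> norm (f 3 s) \<le> B"
    and t: "\<bar>t\<bar> \<le> a"
  shows "norm (f 0 t - (f 0 0 + t *\<^sub>R f 1 0 + (t\<^sup>2 / 2) *\<^sub>R f 2 0)) \<le> B * \<bar>t\<bar> ^ 3"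
proof -
  have "0 \<le> a" using t by (meson abs_ge_zero order_trans)
  then have "0 \<le> B" using bound[of 0] by (metis abs_zero norm_ge_zero order_trans)
  have d: "(f m has_vector_derivative f (Suc m) s) (at s)" if "m < 3" "\<bar>s\<bar> \<le> \<bar>r\<bar>" "\<bar>r\<bar> \<le> a" for m s r
    using deriv that by simp
  have b2: "norm (f 2 s - f 2 0) \<le> B * \<bar>s\<bar> ^ Suc 0" if "\<bar>s\<bar> \<le> a" for s
    by (rule norm_le_power_Suc_by_derivative[where \<phi>' = "f 3"])
       (use that \<open>0 \<le> B\<close> bound d[of 2] in \<open>auto intro!: derivative_eq_intros simp: numeral_eq_Suc\<close>)
  have b1: "norm (f 1 s - f 1 0 - s *\<^sub>R f 2 0) \<le> B * \<bar>s\<bar> ^ Suc 1" if "\<bar>s\<bar> \<le> a" for s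
    by (rule norm_le_power_Suc_by_derivative[where \<phi>' = "\<lambda>s. f 2 s - f 2 0"])
       (use that \<open>0 \<le> B\<close> b2 d[of 1] in \<open>auto intro!: derivative_eq_intros simp: numeral_eq_Suc\<close>)
  have "norm (f 0 t - f 0 0 - t *\<^sub>R f 1 0 - (t\<^sup>2 / 2) *\<^sub>R f 2 0) \<le> B * \<bar>t\<bar> ^ Suc 2"
    by (rule norm_le_power_Suc_by_derivative[where \<phi>' = "\<lambda>s. f 1 s - f 1 0 - s *\<^sub>R f 2 0"])
       (use t \<open>0 \<le> B\<close> b1 d[of 0] in \<open>auto intro!: derivative_eq_intros simp: numeral_eq_Suc power2_eq_square\<close>)
  then show ?thesis by (simp add: algebra_simps)
qed

lemma eventually_nhds_0_along_line:
  fixes p e :: "'a::real_normed_vector"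
  assumes "\<forall>\<^sub>F q in nhds p. P q"
  shows "\<forall>\<^sub>F t in nhds 0. P (p + t *\<^sub>R e)"
proof -
  have "((\<lambda>t. p + t *\<^sub>R e) \<longlongrightarrow> p + 0 *\<^sub>R e) (nhds 0)"
    by (intro tendsto_add tendsto_const tendsto_scaleR filterlim_ident)
  with assms show ?thesis
    by (auto intro: eventually_compose_filterlim)
qed

lemma has_vector_derivative_along_line:
  assumes "G differentiable at (p + t *\<^sub>R e)"
  shows "((\<lambda>s. G (p + s *\<^sub>R e)) has_vector_derivative frechet_derivative G (at (p + t *\<^sub>R e)) e) (at t)"
proof -
  define G' where "G' = frechet_derivative G (at (p + t *\<^sub>R e))"
  have "(G has_derivative G') (at (p + t *\<^sub>R e))"
    using assms unfolding G'_def by (simp add: frechet_derivative_works)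
  then have "((\<lambda>s. G (p + s *\<^sub>R e)) has_derivative (\<lambda>s. G' (s *\<^sub>R e))) (at t)"
    by (auto intro!: derivative_eq_intros has_derivative_compose[of "\<lambda>s. p + s *\<^sub>R e" _ _ _ G])
  moreover have "G' (s *\<^sub>R e) = s *\<^sub>R G' e" for s
    by (rule linear_cmul[OF has_derivative_linear[OF \<open>(G has_derivative G') _\<close>]])
  ultimately show ?thesis
    unfolding has_vector_derivative_def G'_def by simp
qed

lemma Ck_on_3_has_expansion2_along_line:
  fixes f :: "'a::real_normed_vector \<Rightarrow> 'b::real_normed_vector"
  assumes smooth: "Ck_on 3 D f" and D: "open D" "p \<in> D"
  shows "\<exists>c1 c2. has_expansion2 (\<lambda>t. f (p + t *\<^sub>R e)) (f p) c1 c2"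
proof -
  define f1 where "f1 q = frechet_derivative f (at q) e" for q
  define f2 where "f2 q = frechet_derivative f1 (at q) e" for q
  define f3 where "f3 q = frechet_derivative f2 (at q) e" for q
  define g where "g m = (\<lambda>s. ([f, f1, f2, f3] ! m) (p + s *\<^sub>R e))" for m
  have diff: "f differentiable_on D" "f1 differentiable_on D" "f2 differentiable_on D"
    and cont: "continuous_on D f3"
    using smooth unfolding f1_def f2_def f3_def by (simp_all add: numeral_3_eq_3)
  have "open ((\<lambda>s. p + s *\<^sub>R e) -` D)"
    using D(1) by (intro open_vimage) (auto intro!: continuous_intros)
  moreover have "0 \<in> (\<lambda>s. p + s *\<^sub>R e) -` D"
    using D(2) by simp
  ultimately obtain a where "a > 0" and "cball 0 a \<subseteq> (\<lambda>s. p + s *\<^sub>R e) -` D"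
    using open_contains_cball by blast
  then have line: "p + s *\<^sub>R e \<in> D" if "\<bar>s\<bar> \<le> a" for s
    using that by (auto simp: dist_real_def)
  have "compact ((\<lambda>s. f3 (p + s *\<^sub>R e)) ` {-a..a})"
    by (intro compact_continuous_image continuous_on_compose2[OF cont])
       (auto intro!: continuous_intros line)
  then obtain B where B: "\<And>s. \<bar>s\<bar> \<le> a \<Longrightarrow> norm (g 3 s) \<le> B"
    unfolding g_def by (force dest!: compact_imp_bounded simp: bounded_iff)
  have "(g m has_vector_derivative g (Suc m) s) (at s)" if "m < 3" "\<bar>s\<bar> \<le> a" for m s
  proof -
    have "([f, f1, f2] ! m) differentiable at (p + s *\<^sub>R e)"
      using diff line[OF that(2)] D(1) that(1)
      by (auto simp: less_Suc_eq numeral_3_eq_3 differentiable_on_eq_differentiable_at)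
    from has_vector_derivative_along_line[OF this] show ?thesis
      using that(1) by (auto simp: g_def f1_def f2_def f3_def less_Suc_eq numeral_3_eq_3)
  qed
  then have taylor: "norm (g 0 t - (g 0 0 + t *\<^sub>R g 1 0 + (t\<^sup>2 / 2) *\<^sub>R g 2 0)) \<le> B * \<bar>t\<bar> ^ 3"
    if "\<bar>t\<bar> \<le> a" for t
    using B that by (rule norm_Taylor2_remainder_le)
  have "\<forall>\<^sub>F t in nhds 0. norm (f (p + t *\<^sub>R e) - (f p + t *\<^sub>R f1 p + t\<^sup>2 *\<^sub>R ((1/2) *\<^sub>R f2 p)))
      \<le> B * \<bar>t\<bar> ^ 3"
    using eventually_nhds_ball[OF \<open>a > 0\<close>, of 0]
    by eventually_elim (use taylor in \<open>simp add: g_def dist_real_def\<close>)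
  then show ?thesis by (blast intro: has_expansion2I)
qed

section \<open>The scheme along a grid line\<close>

definition FEC_source :: "real \<Rightarrow> ('k::finite \<Rightarrow> real^'k^'k) \<Rightarrow> (real \<Rightarrow> 'k state) \<Rightarrow> (real \<Rightarrow> real^'k) \<Rightarrow> real \<Rightarrow> 'k state" where
  "FEC_source g M U b t =
     FEC g M (U 0) (U t) + (0, (g / 2) *\<^sub>R (Pm M (avg (depth (U 0)) (depth (U t))) *v (b t - b 0)), 0)"

lemma has_expansion2_FEC_source:
  fixes h qx qy b :: "real \<Rightarrow> real^'k::finite"
    and \<rho> :: "real^'d::finite \<Rightarrow> real" and \<phi> :: "'k \<Rightarrow> real^'d \<Rightarrow> real"
  defines "M \<equiv> Mtens \<rho> \<phi>" and "U \<equiv> \<lambda>t. (h t, qx t, qy t)"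
  assumes H: "has_expansion2 h h0 h1 h2" and QX: "has_expansion2 qx qx0 qx1 qx2"
    and QY: "has_expansion2 qy qy0 qy1 qy2" and BB: "has_expansion2 b b0 b1 b2"
    and inv: "\<forall>\<^sub>F t in nhds 0. invertible (Pm M (h t))"
  shows "\<exists>\<Phi> c0 c2. ((\<lambda>t. Fhat g M (U t)) has_vector_derivative \<Phi>) (at 0)
           \<and> has_expansion2 (FEC_source g M U b) c0 ((1/2) *\<^sub>R (\<Phi> - Shat g M (U 0) b1 0)) c2"
proof -
  interpret P: bounded_bilinear "\<lambda>a b. Pm M a *v (b::real^'k)" by (rule bounded_bilinear_Pm)
  have comm: "Pm M a *v c = Pm M c *v a" for a c unfolding M_def by (rule Pm_Mtens_commute)
  obtain u0 u1 u2 where U: "has_expansion2 (\<lambda>t. Pinv M (h t) *v qx t) u0 u1 u2"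
    and u0: "Pm M h0 *v u0 = qx0" and u1: "Pm M h0 *v u1 + Pm M h1 *v u0 = qx1"
    by (rule has_expansion2_Pinv_mult[OF H QX inv])
  obtain v0 v1 v2 where V: "has_expansion2 (\<lambda>t. Pinv M (h t) *v qy t) v0 v1 v2"
    and v0: "Pm M h0 *v v0 = qy0" and v1: "Pm M h0 *v v1 + Pm M h1 *v v0 = qy1"
    by (rule has_expansion2_Pinv_mult[OF H QY inv])
  have h0: "h 0 = h0" and b0: "b 0 = b0"
    by (rule has_expansion2_at_0[OF H], rule has_expansion2_at_0[OF BB])
  have comm_nested: "Pm M (Pm M a *v c) *v d = Pm M d *v (Pm M a *v c)" for a c d
    by (rule comm)
  define \<Phi> where "\<Phi> = (qx1, Pm M qx0 *v u1 + Pm M qx1 *v u0 + (g/2) *\<^sub>R (Pm M h0 *v h1 + Pm M h1 *v h0),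
    Pm M qx0 *v v1 + Pm M qx1 *v v0)"
  have "\<exists>c0 c2. has_expansion2 (\<lambda>t. Fhat g M (U t)) c0 \<Phi> c2"
    by (rule exI, rule exI, rule has_expansion2_cong[OF has_expansion2_Pair[OF QX has_expansion2_Pair[OF
          has_expansion2_add[OF P.has_expansion2_prod[OF QX U] has_expansion2_scaleR[OF P.has_expansion2_prod[OF H H], of "g/2"]]
          P.has_expansion2_prod[OF QX V]]]])
       (simp_all add: Fhat_def U_def \<Phi>_def)
  then have dF: "((\<lambda>t. Fhat g M (U t)) has_vector_derivative \<Phi>) (at 0)"
    by (auto intro: has_expansion2_has_vector_derivative)
  note HA = has_expansion2_avg[OF H] and UA = has_expansion2_avg[OF U] and VA = has_expansion2_avg[OF V]
  note HU = P.has_expansion2_prod[OF HA UA]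
  \<comment> \<open>The linear coefficients agree only because qx = P(h) u to first order (u0, u1) and
    P(a) c = P(c) a.\<close>
  have "\<exists>c0 c2. has_expansion2 (FEC_source g M U b) c0 ((1/2) *\<^sub>R (\<Phi> - Shat g M (U 0) b1 0)) c2"
    by (rule exI, rule exI, rule has_expansion2_cong[OF has_expansion2_add[OF has_expansion2_Pair[OF HU has_expansion2_Pair[OF
          has_expansion2_add[OF has_expansion2_scaleR[OF has_expansion2_avg[OF P.has_expansion2_prod[OF H H]], of "g/2"]
            P.has_expansion2_prod[OF UA HU]]
          P.has_expansion2_prod[OF VA HU]]]
        has_expansion2_Pair[OF has_expansion2_const[of 0] has_expansion2_Pair[OF
          has_expansion2_scaleR[OF P.has_expansion2_prod[OF HA has_expansion2_diff[OF BB has_expansion2_const[of "b 0"]]], of "g/2"]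
          has_expansion2_const[of 0]]]]])
       (simp_all add: FEC_source_def FEC_def Let_def vel_u_def vel_v_def depth_def U_def Shat_def \<Phi>_def h0 b0
         P.add_left P.add_right P.scaleR_left P.scaleR_right algebra_simps comm_nested
         flip: u0 u1 v0 v1)
  with dF show ?thesis by blast
qed

(* The x- and y-parts of scheme_rhs in one cell, written along the grid line through its centre:
   U t and b t are state and bottom at signed distance t, and t is the mesh width. *)
definition scheme_rhs_x :: "real \<Rightarrow> ('k::finite \<Rightarrow> real^'k^'k) \<Rightarrow> (real \<Rightarrow> 'k state) \<Rightarrow> (real \<Rightarrow> real^'k) \<Rightarrow> real \<Rightarrow> 'k state" where
  "scheme_rhs_x g M U b t =
     - (1 / t) *\<^sub>R (FEC g M (U 0) (U t) - FEC g M (U (- t)) (U 0))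
     + (0, - (g / (2 * t)) *\<^sub>R (Pm M (avg (depth (U 0)) (depth (U t))) *v (b t - b 0)
                              + Pm M (avg (depth (U (- t))) (depth (U 0))) *v (b 0 - b (- t))), 0)"

definition scheme_rhs_y :: "real \<Rightarrow> ('k::finite \<Rightarrow> real^'k^'k) \<Rightarrow> (real \<Rightarrow> 'k state) \<Rightarrow> (real \<Rightarrow> real^'k) \<Rightarrow> real \<Rightarrow> 'k state" where
  "scheme_rhs_y g M U b t =
     - (1 / t) *\<^sub>R (GEC g M (U 0) (U t) - GEC g M (U (- t)) (U 0))
     + (0, 0, - (g / (2 * t)) *\<^sub>R (Pm M (avg (depth (U 0)) (depth (U t))) *v (b t - b 0)
                                 + Pm M (avg (depth (U (- t))) (depth (U 0))) *v (b 0 - b (- t))))"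

lemma scheme_rhs_x_central_difference:
  "scheme_rhs_x g M U b t = - (1 / t) *\<^sub>R (FEC_source g M U b t - FEC_source g M U b (- t))"
proof -
  have "FEC g M (U (- t)) (U 0) = FEC g M (U 0) (U (- t))"
    unfolding FEC_def avg_def Let_def by (simp add: add.commute)
  moreover have "avg (depth (U (- t))) (depth (U 0)) = avg (depth (U 0)) (depth (U (- t)))"
    unfolding avg_def by (simp add: add.commute)
  ultimately show ?thesis
    unfolding scheme_rhs_x_def FEC_source_def
    by (simp add: algebra_simps matrix_vector_right_distrib matrix_vector_mult_diff_distrib)
qed

lemma scheme_rhs_x_truncation:
  fixes h qx qy b :: "real \<Rightarrow> real^'k::finite"
    and \<rho> :: "real^'d::finite \<Rightarrow> real" and \<phi> :: "'k \<Rightarrow> real^'d \<Rightarrow> real"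
  defines "M \<equiv> Mtens \<rho> \<phi>" and "U \<equiv> \<lambda>t. (h t, qx t, qy t)"
  assumes H: "\<exists>c0 c1 c2. has_expansion2 h c0 c1 c2" and QX: "\<exists>c0 c1 c2. has_expansion2 qx c0 c1 c2"
    and QY: "\<exists>c0 c1 c2. has_expansion2 qy c0 c1 c2" and BB: "\<exists>c0 c1 c2. has_expansion2 b c0 c1 c2"
    and inv: "\<forall>\<^sub>F t in nhds 0. invertible (Pm M (h t))"
  shows "\<exists>\<Phi> C. ((\<lambda>t. Fhat g M (U t)) has_vector_derivative \<Phi>) (at 0) \<and>
           (\<forall>\<^sub>F t in at_right 0. norm (scheme_rhs_x g M U b t
              - (- \<Phi> + Shat g M (U 0) (vector_derivative b (at 0)) 0)) \<le> C * t\<^sup>2)"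
proof -
  obtain h0 h1 h2 qx0 qx1 qx2 qy0 qy1 qy2 b0 b1 b2
    where "has_expansion2 h h0 h1 h2" "has_expansion2 qx qx0 qx1 qx2" "has_expansion2 qy qy0 qy1 qy2"
      and B: "has_expansion2 b b0 b1 b2"
    using H QX QY BB by blast
  then obtain \<Phi> c0 c2 where dF: "((\<lambda>t. Fhat g M (U t)) has_vector_derivative \<Phi>) (at 0)"
    and chi: "has_expansion2 (FEC_source g M U b) c0 ((1/2) *\<^sub>R (\<Phi> - Shat g M (U 0) b1 0)) c2"
    using has_expansion2_FEC_source[of h _ _ _ qx _ _ _ qy _ _ _ b, OF _ _ _ _ inv[unfolded M_def]]
    unfolding M_def U_def by blast
  obtain C where "\<forall>\<^sub>F t in at_right 0. norm ((1 / t) *\<^sub>R (FEC_source g M U b t - FEC_source g M U b (- t))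
      - 2 *\<^sub>R ((1/2) *\<^sub>R (\<Phi> - Shat g M (U 0) b1 0))) \<le> C * t\<^sup>2"
    using has_expansion2_central_difference[OF chi] by blast
  moreover have "vector_derivative b (at 0) = b1"
    by (rule vector_derivative_at[OF has_expansion2_has_vector_derivative[OF B]])
  ultimately have "\<forall>\<^sub>F t in at_right 0. norm (scheme_rhs_x g M U b t
      - (- \<Phi> + Shat g M (U 0) (vector_derivative b (at 0)) 0)) \<le> C * t\<^sup>2"
    by (simp add: scheme_rhs_x_central_difference norm_minus_commute algebra_simps)
  with dF show ?thesis by blast
qed

definition swap_xy :: "'k state \<Rightarrow> 'k state" where
  "swap_xy U = (case U of (h, qx, qy) \<Rightarrow> (h, qy, qx))"

lemma swap_xy_simps [simp]: "swap_xy (h, qx, qy) = (h, qy, qx)"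
  by (simp add: swap_xy_def)

lemma norm_swap_xy [simp]: "norm (swap_xy U) = norm U"
  by (cases U) (simp add: norm_Pair add_ac)

lemma bounded_linear_swap_xy: "bounded_linear swap_xy"
proof (rule bounded_linear_intro[where K = 1])
  show "swap_xy (U + V) = swap_xy U + swap_xy V" "swap_xy (c *\<^sub>R U) = c *\<^sub>R swap_xy U" for U V c
    by (cases U, cases V, simp)+
qed simp

lemma Ghat_swap_xy: "Ghat g M U = swap_xy (Fhat g M (swap_xy U))"
  by (cases U) (simp add: Ghat_def Fhat_def)

lemma GEC_swap_xy: "GEC g M V W = swap_xy (FEC g M (swap_xy V) (swap_xy W))"
  by (cases V, cases W) (simp add: GEC_def FEC_def Let_def vel_u_def vel_v_def depth_def)

lemma depth_swap_xy [simp]: "depth (swap_xy V) = depth V"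
  by (cases V) (simp add: depth_def)

lemma scheme_rhs_y_swap_xy:
  "scheme_rhs_y g M U b t = swap_xy (scheme_rhs_x g M (\<lambda>s. swap_xy (U s)) b t)"
proof -
  interpret swap: bounded_linear swap_xy by (rule bounded_linear_swap_xy)
  show ?thesis
    by (simp add: GEC_swap_xy scheme_rhs_x_def scheme_rhs_y_def swap.diff swap.add swap.scaleR)
qed

lemma scheme_rhs_y_truncation:
  fixes h qx qy b :: "real \<Rightarrow> real^'k::finite"
    and \<rho> :: "real^'d::finite \<Rightarrow> real" and \<phi> :: "'k \<Rightarrow> real^'d \<Rightarrow> real"
  defines "M \<equiv> Mtens \<rho> \<phi>" and "U \<equiv> \<lambda>t. (h t, qx t, qy t)"
  assumes H: "\<exists>c0 c1 c2. has_expansion2 h c0 c1 c2" and QX: "\<exists>c0 c1 c2. has_expansion2 qx c0 c1 c2"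
    and QY: "\<exists>c0 c1 c2. has_expansion2 qy c0 c1 c2" and BB: "\<exists>c0 c1 c2. has_expansion2 b c0 c1 c2"
    and inv: "\<forall>\<^sub>F t in nhds 0. invertible (Pm M (h t))"
  shows "\<exists>\<Gamma> C. ((\<lambda>t. Ghat g M (U t)) has_vector_derivative \<Gamma>) (at 0) \<and>
           (\<forall>\<^sub>F t in at_right 0. norm (scheme_rhs_y g M U b t
              - (- \<Gamma> + Shat g M (U 0) 0 (vector_derivative b (at 0)))) \<le> C * t\<^sup>2)"
proof -
  interpret swap: bounded_linear swap_xy by (rule bounded_linear_swap_xy)
  obtain \<Phi> C where dF: "((\<lambda>t. Fhat g M (swap_xy (U t))) has_vector_derivative \<Phi>) (at 0)"
    and bound: "\<forall>\<^sub>F t in at_right 0. norm (scheme_rhs_x g M (\<lambda>t. swap_xy (U t)) b t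
              - (- \<Phi> + Shat g M (swap_xy (U 0)) (vector_derivative b (at 0)) 0)) \<le> C * t\<^sup>2"
    using scheme_rhs_x_truncation[OF H QY QX BB inv[unfolded M_def], of g] unfolding M_def U_def by auto
  have dG: "((\<lambda>t. Ghat g M (U t)) has_vector_derivative swap_xy \<Phi>) (at 0)"
    unfolding Ghat_swap_xy by (rule swap.has_vector_derivative[OF dF])
  have "swap_xy (Shat g M (swap_xy V) \<beta> 0) = Shat g M V 0 \<beta>" for V \<beta>
    by (cases V) (simp add: Shat_def)
  then have eq: "scheme_rhs_y g M U b t - (- swap_xy \<Phi> + Shat g M (U 0) 0 (vector_derivative b (at 0)))
      = swap_xy (scheme_rhs_x g M (\<lambda>t. swap_xy (U t)) b t
              - (- \<Phi> + Shat g M (swap_xy (U 0)) (vector_derivative b (at 0)) 0))" for t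
    by (simp add: scheme_rhs_y_swap_xy swap.diff swap.add swap.neg)
  have "\<forall>\<^sub>F t in at_right 0. norm (scheme_rhs_y g M U b t
      - (- swap_xy \<Phi> + Shat g M (U 0) 0 (vector_derivative b (at 0)))) \<le> C * t\<^sup>2"
    using bound by (simp only: eq norm_swap_xy)
  with dG show ?thesis by blast
qed

section \<open>Truncation error\<close>

lemma vector_derivative_shift_0:
  fixes f :: "real \<Rightarrow> 'a::real_normed_vector"
  shows "vector_derivative f (at a) = vector_derivative (\<lambda>t. f (a + t)) (at 0)"
proof -
  have shift: "((\<lambda>t. f (c + t)) has_vector_derivative D) (at s)"
    if "(f has_vector_derivative D) (at (c + s))" for f :: "real \<Rightarrow> 'a" and c s D
  proof -
    have "((\<lambda>t. c + t) has_vector_derivative 1) (at s)"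
      by (auto intro!: derivative_eq_intros)
    from vector_diff_chain_at[OF this that] show ?thesis by (simp add: o_def)
  qed
  have "(\<lambda>D. (f has_vector_derivative D) (at a)) = (\<lambda>D. ((\<lambda>t. f (a + t)) has_vector_derivative D) (at 0))"
    using shift[where f = f and c = a and s = 0] shift[where f = "\<lambda>t. f (a + t)" and c = "- a" and s = a]
    by (intro ext iffI) auto
  then show ?thesis by (simp add: vector_derivative_def)
qed

lemma scheme_rhs_split:
  "scheme_rhs g M dx dy (\<lambda>i j. V (x0 + real_of_int i * dx, y0 + real_of_int j * dy))
       (\<lambda>i j. B (x0 + real_of_int i * dx, y0 + real_of_int j * dy)) 0 0
   = scheme_rhs_x g M (\<lambda>t. V (x0 + t, y0)) (\<lambda>t. B (x0 + t, y0)) dx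
     + scheme_rhs_y g M (\<lambda>t. V (x0, y0 + t)) (\<lambda>t. B (x0, y0 + t)) dy"
  unfolding scheme_rhs_def scheme_rhs_x_def scheme_rhs_y_def Sdisc_def Let_def
  by (simp add: algebra_simps)

lemma pde_rhs_split:
  "pde_rhs g M V B x0 y0
   = (- vector_derivative (\<lambda>t. Fhat g M (V (x0 + t, y0))) (at 0)
        + Shat g M (V (x0, y0)) (vector_derivative (\<lambda>t. B (x0 + t, y0)) (at 0)) 0)
     + (- vector_derivative (\<lambda>t. Ghat g M (V (x0, y0 + t))) (at 0)
        + Shat g M (V (x0, y0)) 0 (vector_derivative (\<lambda>t. B (x0, y0 + t)) (at 0)))"
  unfolding pde_rhs_def
  by (subst (1 2) vector_derivative_shift_0[where a = x0], subst (1 2) vector_derivative_shift_0[where a = y0])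
     (cases "V (x0, y0)", simp add: Shat_def algebra_simps)

lemma bigo_sum_sq_at_right_quadrant:
  fixes E1 E2 :: "real \<Rightarrow> 'a::real_normed_vector"
  assumes "\<forall>\<^sub>F t in at_right 0. norm (E1 t) \<le> C1 * t\<^sup>2" and "\<forall>\<^sub>F t in at_right 0. norm (E2 t) \<le> C2 * t\<^sup>2"
  shows "(\<lambda>(x, y). norm (E1 x + E2 y)) \<in> O[at (0, 0) within {p. fst p > 0 \<and> snd p > 0}](\<lambda>(x, y). x\<^sup>2 + y\<^sup>2)"
proof (rule bigoI)
  obtain d1 d2 where "d1 > 0" "d2 > 0"
    and b1: "\<And>x. 0 < x \<Longrightarrow> x < d1 \<Longrightarrow> norm (E1 x) \<le> C1 * x\<^sup>2"
    and b2: "\<And>y. 0 < y \<Longrightarrow> y < d2 \<Longrightarrow> norm (E2 y) \<le> C2 * y\<^sup>2"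
    using assms unfolding eventually_at_right_field by auto
  have "norm (E1 x + E2 y) \<le> (\<bar>C1\<bar> + \<bar>C2\<bar>) * (x\<^sup>2 + y\<^sup>2)"
    if "0 < x" "x < d1" "0 < y" "y < d2" for x y
  proof -
    have "norm (E1 x + E2 y) \<le> C1 * x\<^sup>2 + C2 * y\<^sup>2"
      using norm_triangle_ineq[of "E1 x" "E2 y"] b1[OF that(1,2)] b2[OF that(3,4)] by linarith
    also have "\<dots> \<le> \<bar>C1\<bar> * x\<^sup>2 + \<bar>C2\<bar> * y\<^sup>2"
      by (intro add_mono mult_right_mono) auto
    also have "\<dots> \<le> (\<bar>C1\<bar> + \<bar>C2\<bar>) * (x\<^sup>2 + y\<^sup>2)"
      by (simp add: algebra_simps)
    finally show ?thesis .
  qed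
  moreover have "\<forall>\<^sub>F p in at (0, 0) within {p. fst p > 0 \<and> snd p > 0}.
      0 < fst p \<and> fst p < d1 \<and> 0 < snd p \<and> snd p < d2"
  proof -
    have "fst p < d1 \<and> snd p < d2" if "dist p (0, 0) < min d1 d2" for p :: "real \<times> real"
      using that dist_fst_le[of p "(0, 0)"] dist_snd_le[of p "(0, 0)"] by (auto simp: dist_real_def)
    then show ?thesis
      unfolding eventually_at using \<open>d1 > 0\<close> \<open>d2 > 0\<close> by (intro exI[of _ "min d1 d2"]) auto
  qed
  ultimately show "\<forall>\<^sub>F p in at (0, 0) within {p. fst p > 0 \<and> snd p > 0}.
      norm (case p of (x, y) \<Rightarrow> norm (E1 x + E2 y)) \<le> (\<bar>C1\<bar> + \<bar>C2\<bar>) * norm (case p of (x, y) \<Rightarrow> x\<^sup>2 + y\<^sup>2)"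
    by (auto elim!: eventually_mono)
qed

lemma bigo_line_truncation_errors:
  fixes F1 F2 :: "real \<Rightarrow> 'a::real_normed_vector"
  assumes "\<exists>\<Phi> C. (F1 has_vector_derivative \<Phi>) (at 0) \<and> (\<forall>\<^sub>F t in at_right 0. norm (E1 t - (- \<Phi> + S1)) \<le> C * t\<^sup>2)"
    and "\<exists>\<Gamma> C. (F2 has_vector_derivative \<Gamma>) (at 0) \<and> (\<forall>\<^sub>F t in at_right 0. norm (E2 t - (- \<Gamma> + S2)) \<le> C * t\<^sup>2)"
  shows "(\<lambda>(dx, dy). norm (E1 dx + E2 dy
            - ((- vector_derivative F1 (at 0) + S1) + (- vector_derivative F2 (at 0) + S2))))
         \<in> O[at (0, 0) within {p. fst p > 0 \<and> snd p > 0}](\<lambda>(dx, dy). dx\<^sup>2 + dy\<^sup>2)"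
proof -
  obtain \<Phi> \<Gamma> Cx Cy where "(F1 has_vector_derivative \<Phi>) (at 0)" "(F2 has_vector_derivative \<Gamma>) (at 0)"
    and bounds: "\<forall>\<^sub>F t in at_right 0. norm (E1 t - (- \<Phi> + S1)) \<le> Cx * t\<^sup>2"
      "\<forall>\<^sub>F t in at_right 0. norm (E2 t - (- \<Gamma> + S2)) \<le> Cy * t\<^sup>2"
    using assms by blast
  then have "vector_derivative F1 (at 0) = \<Phi>" "vector_derivative F2 (at 0) = \<Gamma>"
    by (simp_all add: vector_derivative_at)
  with bigo_sum_sq_at_right_quadrant[OF bounds] show ?thesis
    by (simp add: algebra_simps)
qed

theorem lemma4p2:
  fixes \<rho> :: "real^'d::finite \<Rightarrow> real"
    and \<phi> :: "'k::finite \<Rightarrow> real^'d \<Rightarrow> real"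
    and k1 :: 'k
    and g :: real
    and D :: "(real \<times> real) set"
    and h qx qy B :: "real \<times> real \<Rightarrow> real^'k"
    and x0 y0 :: real
  assumes basis: "orthonormal_pc_basis \<rho> \<phi> k1"
    and g_pos: "g > 0"
    and open_dom: "open D"
    and pt: "(x0, y0) \<in> D"
    and smooth_h: "smooth_on D h"
    and smooth_qx: "smooth_on D qx"
    and smooth_qy: "smooth_on D qy"
    and smooth_B: "smooth_on D B"
    and posdef: "\<forall>p\<in>D. pos_def (Pm (Mtens \<rho> \<phi>) (h p))"
  shows "(\<lambda>(dx, dy). norm
            (scheme_rhs g (Mtens \<rho> \<phi>) dx dy
               (\<lambda>i j. let p = (x0 + real_of_int i * dx, y0 + real_of_int j * dy)
                      in (h p, qx p, qy p))
               (\<lambda>i j. B (x0 + real_of_int i * dx, y0 + real_of_int j * dy)) 0 0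
             - pde_rhs g (Mtens \<rho> \<phi>) (\<lambda>p. (h p, qx p, qy p)) B x0 y0))
         \<in> O[(at (0, 0) within {p. fst p > 0 \<and> snd p > 0})](\<lambda>(dx, dy). dx\<^sup>2 + dy\<^sup>2)"
proof -
  \<comment> \<open>Only the symmetry of the triple products M_k enters (through Pm_Mtens_commute).\<close>
  define V where "V p = (h p, qx p, qy p)" for p
  have line_x: "\<exists>c0 c1 c2. has_expansion2 (\<lambda>t. f (x0 + t, y0)) c0 c1 c2"
    and line_y: "\<exists>c0 c1 c2. has_expansion2 (\<lambda>t. f (x0, y0 + t)) c0 c1 c2"
    if "smooth_on D f" for f :: "real \<times> real \<Rightarrow> real^'k"
    using that Ck_on_3_has_expansion2_along_line[OF _ open_dom pt, of f "(1, 0)"]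
      Ck_on_3_has_expansion2_along_line[OF _ open_dom pt, of f "(0, 1)"]
    by (auto simp: smooth_on_def)
  have "\<forall>\<^sub>F q in nhds (x0, y0). invertible (Pm (Mtens \<rho> \<phi>) (h q))"
    using eventually_nhds_in_open[OF open_dom pt] posdef pos_def_invertible by (auto elim!: eventually_mono)
  from eventually_nhds_0_along_line[OF this, of "(1, 0)"] eventually_nhds_0_along_line[OF this, of "(0, 1)"]
  have inv_x: "\<forall>\<^sub>F t in nhds 0. invertible (Pm (Mtens \<rho> \<phi>) (h (x0 + t, y0)))"
    and inv_y: "\<forall>\<^sub>F t in nhds 0. invertible (Pm (Mtens \<rho> \<phi>) (h (x0, y0 + t)))"
    by simp_all
  from bigo_line_truncation_errors[OF
      scheme_rhs_x_truncation[OF line_x[OF smooth_h] line_x[OF smooth_qx] line_x[OF smooth_qy] line_x[OF smooth_B] inv_x, of g]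
      scheme_rhs_y_truncation[OF line_y[OF smooth_h] line_y[OF smooth_qx] line_y[OF smooth_qy] line_y[OF smooth_B] inv_y, of g]]
  show ?thesis
    unfolding Let_def V_def[symmetric] scheme_rhs_split pde_rhs_split by (simp add: V_def)
qed

end
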